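(* Let $M$ be a system execution satisfying the Lazy Set axioms A0, A1, A2, let $\Rightarrow$ be the relation defined in the context, and suppose $X\Rightarrow Y\Rightarrow Z$. Then: (1) if $\mathrm{Add}(X)$, then $X<Z$, $\mathrm{Cnt}^1(Y)$ and $\mathrm{Rem}^1(Z)$; (2) if $\mathrm{Rem}(X)$, then $X<Z$; (3) if $\mathrm{Cnt}(X)$, then $\mathrm{Begin}(X)<\mathrm{End}(Z)$.
   Context: A system execution $M$ consists of: a set of events, partitioned into low-level events (actions) and high-level events; unary predicates $\mathrm{Add},\mathrm{Rem},\mathrm{Cnt}$ on events; a partial order $<$ on events in which every event has finitely many predecessors (and Lamport's finiteness property: for every event $x$ there is a finite set $E$ with $x<y$ for all events $y\notin E$); functions $\mathrm{Begin},\mathrm{End}$ from events to actions with $\mathrm{Begin}(e)=\mathrm{End}(e)=e$ for actions $e$; functions $\chi$ (events $\to\{0,1,f\}$), $\mathrm{val}$ (events $\to\mathbb N$), $\gamma$ (events $\to$ events). For events $X,Y$, $X<Y$ iff $\mathrm{End}(X)<\mathrm{Begin}(Y)$. Notation: $\mathrm{Add}^p(a)$ abbreviates $\mathrm{Add}(a)\wedge\chi(a)=p$, similarly $\mathrm{Rem}^p,\mathrm{Cnt}^p$; $\mathrm{Op}^p(a)$ abbreviates $(\mathrm{Add}(a)\vee\mathrm{Rem}(a)\vee\mathrm{Cnt}(a))\wedge\chi(a)=p$ for $p\in\{0,1\}$. A0: $\mathrm{Add},\mathrm{Rem},\mathrm{Cnt}$ pairwise disjoint; $\mathrm{Add},\mathrm{Rem}$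 events are actions, $\mathrm{Cnt}$ events are high-level; $\mathrm{Begin}(X),\mathrm{End}(X)$ are actions; for $\mathrm{Cnt}$ events $E$, $\mathrm{Begin}(E)<\mathrm{End}(E)$; $<$ restricted to actions is linear. A1: for every $A$ with $\mathrm{Op}^1(A)$: $\mathrm{Add}^0(\gamma(A))$, $\mathrm{val}(\gamma(A))=\mathrm{val}(A)$, $\gamma(A)<\mathrm{End}(A)$, and no $R$ has $\mathrm{Rem}^1(R)$, $\gamma(R)=\gamma(A)$, $\gamma(A)<R<A$. A2: if $\mathrm{Op}^0(B)$, $\mathrm{Add}^0(A)$, $A<B$, $\mathrm{val}(A)=\mathrm{val}(B)$, then some $R$ has $\mathrm{Rem}^1(R)$, $A=\gamma(R)$, $R<\mathrm{End}(B)$. The relation $\Rightarrow$ on events holds exactly in the following cases: (1) for every $\mathrm{Cnt}^1$ event $C$: $\gamma(C)\Rightarrow C$, and $C\Rightarrow R$ for every $R$ with $\mathrm{Rem}^1(R)$ and $\gamma(R)=\gamma(C)$; (2) $R\Rightarrow C$ whenever $\mathrm{Cnt}^0(C)$, $\mathrm{Rem}^1(R)$, $\mathrm{val}(R)=\mathrm{val}(C)$, not $C<R$, and $\gamma(R)<C$; (3) $C\Rightarrow A$ whenever $\mathrm{Cnt}^0(C)$, $\mathrm{Add}^0(A)$, $\mathrm{val}(C)=\mathrm{val}(A)$ and not $A<C$. *)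

theory Defs
  imports Main
begin

datatype chival = C0 | C1 | Cf

text \<open>A system execution over the event type 'e (all elements of 'e are events).
  isAction: low-level events (actions); the others are high-level events.\<close>
record 'e sysexec =
  isAction :: "'e \<Rightarrow> bool"
  isAdd :: "'e \<Rightarrow> bool"
  isRem :: "'e \<Rightarrow> bool"
  isCnt :: "'e \<Rightarrow> bool"
  prec :: "'e \<Rightarrow> 'e \<Rightarrow> bool"
  Begin :: "'e \<Rightarrow> 'e"
  End :: "'e \<Rightarrow> 'e"
  chi :: "'e \<Rightarrow> chival"
  val :: "'e \<Rightarrow> nat"
  gamma :: "'e \<Rightarrow> 'e"

definition system_execution :: "'e sysexec \<Rightarrow> bool" where
  "system_execution M \<longleftrightarrow>
     (\<forall>x. \<not> prec M x x) \<and>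
     (\<forall>x y z. prec M x y \<longrightarrow> prec M y z \<longrightarrow> prec M x z) \<and>
     (\<forall>x. finite {y. prec M y x}) \<and>
     (\<forall>x. \<exists>E. finite E \<and> (\<forall>y. y \<notin> E \<longrightarrow> prec M x y)) \<and>
     (\<forall>e. isAction M (Begin M e) \<and> isAction M (End M e)) \<and>
     (\<forall>e. isAction M e \<longrightarrow> Begin M e = e \<and> End M e = e) \<and>
     (\<forall>X Y. prec M X Y \<longleftrightarrow> prec M (End M X) (Begin M Y))"

definition AddP :: "'e sysexec \<Rightarrow> chival \<Rightarrow> 'e \<Rightarrow> bool" where
  "AddP M p a \<longleftrightarrow> isAdd M a \<and> chi M a = p"
definition RemP :: "'e sysexec \<Rightarrow> chival \<Rightarrow> 'e \<Rightarrow> bool" where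
  "RemP M p a \<longleftrightarrow> isRem M a \<and> chi M a = p"
definition CntP :: "'e sysexec \<Rightarrow> chival \<Rightarrow> 'e \<Rightarrow> bool" where
  "CntP M p a \<longleftrightarrow> isCnt M a \<and> chi M a = p"
definition OpP :: "'e sysexec \<Rightarrow> chival \<Rightarrow> 'e \<Rightarrow> bool" where
  "OpP M p a \<longleftrightarrow> (isAdd M a \<or> isRem M a \<or> isCnt M a) \<and> chi M a = p"

definition A0 :: "'e sysexec \<Rightarrow> bool" where
  "A0 M \<longleftrightarrow>
     (\<forall>e. \<not> (isAdd M e \<and> isRem M e) \<and> \<not> (isAdd M e \<and> isCnt M e) \<and> \<not> (isRem M e \<and> isCnt M e)) \<and>
     (\<forall>e. isAdd M e \<longrightarrow> isAction M e) \<and>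
     (\<forall>e. isRem M e \<longrightarrow> isAction M e) \<and>
     (\<forall>e. isCnt M e \<longrightarrow> \<not> isAction M e) \<and>
     (\<forall>X. isAction M (Begin M X) \<and> isAction M (End M X)) \<and>
     (\<forall>E. isCnt M E \<longrightarrow> prec M (Begin M E) (End M E)) \<and>
     (\<forall>a b. isAction M a \<longrightarrow> isAction M b \<longrightarrow> a = b \<or> prec M a b \<or> prec M b a)"

definition A1 :: "'e sysexec \<Rightarrow> bool" where
  "A1 M \<longleftrightarrow> (\<forall>A. OpP M C1 A \<longrightarrow>
     AddP M C0 (gamma M A) \<and> val M (gamma M A) = val M A \<and>
     prec M (gamma M A) (End M A) \<and>
     \<not> (\<exists>R. RemP M C1 R \<and> gamma M R = gamma M A \<and> prec M (gamma M A) R \<and> prec M R A))"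

definition A2 :: "'e sysexec \<Rightarrow> bool" where
  "A2 M \<longleftrightarrow> (\<forall>A B. OpP M C0 B \<longrightarrow> AddP M C0 A \<longrightarrow> prec M A B \<longrightarrow> val M A = val M B \<longrightarrow>
     (\<exists>R. RemP M C1 R \<and> A = gamma M R \<and> prec M R (End M B)))"

definition arrow :: "'e sysexec \<Rightarrow> 'e \<Rightarrow> 'e \<Rightarrow> bool" where
  "arrow M X Y \<longleftrightarrow>
     (CntP M C1 Y \<and> X = gamma M Y) \<or>
     (CntP M C1 X \<and> RemP M C1 Y \<and> gamma M Y = gamma M X) \<or>
     (CntP M C0 Y \<and> RemP M C1 X \<and> val M X = val M Y \<and> \<not> prec M Y X \<and> prec M (gamma M X) Y) \<or>
     (CntP M C0 X \<and> AddP M C0 Y \<and> val M X = val M Y \<and> \<not> prec M Y X)"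

end

theory Submission
  imports Defs
begin

text \<open>Each arrow fixes the kinds of its two ends, so a chain \<open>X \<Rightarrow> Y \<Rightarrow> Z\<close> has one of four
  shapes: \<open>\<gamma>(Y) \<Rightarrow> Cnt\<^sup>1 \<Rightarrow> Rem\<^sup>1\<close>, \<open>Rem\<^sup>1 \<Rightarrow> Cnt\<^sup>0 \<Rightarrow> Add\<^sup>0\<close>, \<open>Cnt\<^sup>1 \<Rightarrow> Rem\<^sup>1 \<Rightarrow> Cnt\<^sup>0\<close> and
  \<open>Cnt\<^sup>0 \<Rightarrow> Add\<^sup>0 \<Rightarrow> Cnt\<^sup>1\<close>. The first and the last are settled by A1 (\<open>\<gamma>(A) < End(A)\<close>) and the
  linearity of actions. In the two middle shapes \<open>X\<close> is an \<open>Op\<^sup>1\<close> event and \<open>\<gamma>(X)\<close> precedes an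
  \<open>Op\<^sup>0\<close> event \<open>Z\<close> of the same value; A2 then yields a \<open>Rem\<^sup>1\<close> action \<open>R\<close> with \<open>\<gamma>(R) = \<gamma>(X)\<close>
  and \<open>R < End(Z)\<close>, and if \<open>End(Z)\<close> did not follow \<open>Begin(X)\<close>, then \<open>R\<close> would lie strictly between
  \<open>\<gamma>(X)\<close> and \<open>X\<close>, which A1 forbids.\<close>

locale lazy_set_execution =
  fixes M :: "'e sysexec"
  assumes system_execution: "system_execution M"
    and axiom_A0: "A0 M" and axiom_A1: "A1 M" and axiom_A2: "A2 M"
begin

lemma prec_trans: "prec M x y \<Longrightarrow> prec M y z \<Longrightarrow> prec M x z"
  using system_execution unfolding system_execution_def by blast

lemma prec_iff_End_Begin: "prec M x y \<longleftrightarrow> prec M (End M x) (Begin M y)"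
  using system_execution unfolding system_execution_def by blast

lemma Begin_action: "isAction M a \<Longrightarrow> Begin M a = a"
  and End_action: "isAction M a \<Longrightarrow> End M a = a"
  using system_execution unfolding system_execution_def by blast+

lemma action_Begin: "isAction M (Begin M x)"
  and action_End: "isAction M (End M x)"
  using system_execution unfolding system_execution_def by blast+

lemma Add_action: "isAdd M e \<Longrightarrow> isAction M e"
  and Rem_action: "isRem M e \<Longrightarrow> isAction M e"
  using axiom_A0 unfolding A0_def by blast+

lemma Add_not_Rem: "isAdd M e \<Longrightarrow> \<not> isRem M e"
  and Add_not_Cnt: "isAdd M e \<Longrightarrow> \<not> isCnt M e"
  and Rem_not_Cnt: "isRem M e \<Longrightarrow> \<not> isCnt M e"
  using axiom_A0 unfolding A0_def by blast+

lemma not_prec_action: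
  assumes "isAction M a" "isAction M b" "\<not> prec M a b"
  shows "b = a \<or> prec M b a"
  using assms axiom_A0 unfolding A0_def by blast

lemma prec_action_left: "isAction M a \<Longrightarrow> prec M a y \<longleftrightarrow> prec M a (Begin M y)"
  by (metis prec_iff_End_Begin End_action)

lemma prec_Begin_if_not_prec:
  assumes "isAction M a" "\<not> prec M a y"
  shows "Begin M y = a \<or> prec M (Begin M y) a"
  using not_prec_action[OF assms(1) action_Begin] assms prec_action_left by blast

lemma gamma_Add0: "OpP M C1 A \<Longrightarrow> AddP M C0 (gamma M A)"
  and val_gamma: "OpP M C1 A \<Longrightarrow> val M (gamma M A) = val M A"
  and gamma_prec_End: "OpP M C1 A \<Longrightarrow> prec M (gamma M A) (End M A)"
  using axiom_A1 unfolding A1_def by blast+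

lemma gamma_Cnt1_Add: "CntP M C1 Y \<Longrightarrow> isAdd M (gamma M Y)"
  using gamma_Add0 by (simp add: CntP_def OpP_def AddP_def)

lemma Rem1_not_prec_Op1_same_gamma:
  assumes A: "OpP M C1 A" and R: "RemP M C1 R" and same: "gamma M R = gamma M A"
  shows "\<not> prec M R A"
proof
  assume "prec M R A"
  moreover have "prec M (gamma M A) R"
    using gamma_prec_End[of R] R same Rem_action End_action by (auto simp: RemP_def OpP_def)
  ultimately show False
    using axiom_A1 A R same unfolding A1_def by blast
qed

text \<open>The key consequence of A2: \<open>\<gamma>(X)\<close> is removed before \<open>Z\<close> ends, and by A1 not before \<open>X\<close>
  begins.\<close>
lemma Op1_Begin_prec_End_Op0:
  assumes X: "OpP M C1 X" and Z: "OpP M C0 Z"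
    and same_val: "val M X = val M Z" and gamma_prec: "prec M (gamma M X) Z"
  shows "prec M (Begin M X) (End M Z)"
proof (rule ccontr)
  assume not_prec: "\<not> prec M (Begin M X) (End M Z)"
  obtain R where R: "RemP M C1 R" "gamma M R = gamma M X" "prec M R (End M Z)"
    using axiom_A2 Z gamma_Add0[OF X] gamma_prec same_val val_gamma[OF X]
    unfolding A2_def by metis
  have "End M Z = Begin M X \<or> prec M (End M Z) (Begin M X)"
    using not_prec_action[OF action_Begin action_End not_prec] .
  then have "prec M R (Begin M X)"
    using R(3) prec_trans by metis
  then have "prec M R X"
    using R(1) Rem_action prec_action_left unfolding RemP_def by blast
  then show False
    using Rem1_not_prec_Op1_same_gamma[OF X R(1,2)] by contradiction
qed

lemma arrow_from_Add:
  "isAdd M X \<Longrightarrow> arrow M X Y \<Longrightarrow> CntP M C1 Y \<and> X = gamma M Y"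
  using Add_not_Rem Add_not_Cnt by (auto simp: arrow_def CntP_def RemP_def)

lemma arrow_from_Rem:
  "isRem M X \<Longrightarrow> arrow M X Y \<Longrightarrow>
     RemP M C1 X \<and> CntP M C0 Y \<and> val M X = val M Y \<and> \<not> prec M Y X \<and> prec M (gamma M X) Y"
  using Add_not_Rem Rem_not_Cnt gamma_Cnt1_Add by (auto simp: arrow_def CntP_def RemP_def)

lemma arrow_from_Cnt:
  "isCnt M X \<Longrightarrow> arrow M X Y \<Longrightarrow> CntP M C1 X \<or> CntP M C0 X"
  using Add_not_Cnt Rem_not_Cnt gamma_Cnt1_Add by (auto simp: arrow_def RemP_def)

lemma arrow_from_Cnt1:
  "CntP M C1 X \<Longrightarrow> arrow M X Y \<Longrightarrow> RemP M C1 Y \<and> gamma M Y = gamma M X"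
  using Add_not_Cnt Rem_not_Cnt gamma_Cnt1_Add by (auto simp: arrow_def CntP_def RemP_def)

lemma arrow_from_Cnt0:
  "CntP M C0 X \<Longrightarrow> arrow M X Y \<Longrightarrow> AddP M C0 Y \<and> val M X = val M Y \<and> \<not> prec M Y X"
  using Add_not_Cnt Rem_not_Cnt gamma_Cnt1_Add by (auto simp: arrow_def CntP_def RemP_def)

lemma arrow_arrow_from_Add:
  assumes "isAdd M X" "arrow M X Y" "arrow M Y Z"
  shows "prec M X Z \<and> CntP M C1 Y \<and> RemP M C1 Z"
proof -
  have Y: "CntP M C1 Y" "X = gamma M Y"
    using arrow_from_Add assms(1,2) by blast+
  then have Z: "RemP M C1 Z" "gamma M Z = X"
    using arrow_from_Cnt1 assms(3) by auto
  then have "prec M X (End M Z)"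
    using gamma_prec_End[of Z] by (auto simp: RemP_def OpP_def)
  then have "prec M X Z"
    using Z(1) Rem_action End_action by (auto simp: RemP_def)
  with Y Z show ?thesis by blast
qed

lemma arrow_arrow_from_Rem:
  assumes "isRem M X" "arrow M X Y" "arrow M Y Z"
  shows "prec M X Z"
proof -
  have X: "RemP M C1 X" and Y: "CntP M C0 Y" "val M X = val M Y" "prec M (gamma M X) Y"
    using arrow_from_Rem assms(1,2) by blast+
  have Z: "AddP M C0 Z" "val M Y = val M Z" "\<not> prec M Z Y"
    using arrow_from_Cnt0 Y(1) assms(3) by blast+
  have gamma_action: "isAction M (gamma M X)" and Z_action: "isAction M Z"
    using gamma_Add0[of X] X Z(1) Add_action by (auto simp: RemP_def OpP_def AddP_def)
  have "prec M (gamma M X) (Begin M Y)"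
    using Y(3) gamma_action prec_action_left by blast
  moreover have "Begin M Y = Z \<or> prec M (Begin M Y) Z"
    using prec_Begin_if_not_prec[OF Z_action Z(3)] .
  ultimately have "prec M (gamma M X) Z"
    using prec_trans by metis
  then have "prec M (Begin M X) (End M Z)"
    using Op1_Begin_prec_End_Op0 X Y(2) Z(1,2) by (simp add: RemP_def AddP_def OpP_def)
  then show ?thesis
    using X Z(1) Rem_action Add_action Begin_action End_action by (simp add: RemP_def AddP_def)
qed

lemma arrow_arrow_from_Cnt:
  assumes "isCnt M X" "arrow M X Y" "arrow M Y Z"
  shows "prec M (Begin M X) (End M Z)"
  using arrow_from_Cnt[OF assms(1,2)]
proof
  assume X: "CntP M C1 X"
  then have Y: "RemP M C1 Y" "gamma M Y = gamma M X"
    using arrow_from_Cnt1 assms(2) by blast+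
  then have Z: "CntP M C0 Z" "val M Y = val M Z" "prec M (gamma M X) Z"
    using arrow_from_Rem[of Y Z] assms(3) by (auto simp: RemP_def)
  have "val M X = val M Y"
    using val_gamma X Y by (metis CntP_def OpP_def RemP_def)
  then show ?thesis
    using Op1_Begin_prec_End_Op0 X Z by (simp add: CntP_def OpP_def)
next
  assume "CntP M C0 X"
  then have Y: "AddP M C0 Y" "\<not> prec M Y X"
    using arrow_from_Cnt0 assms(2) by blast+
  have Z: "CntP M C1 Z" "Y = gamma M Z"
    using arrow_from_Add Y(1) assms(3) by (auto simp: AddP_def)
  have Y_action: "isAction M Y"
    using Y(1) Add_action by (simp add: AddP_def)
  have "prec M Y (End M Z)"
    using gamma_prec_End Z by (simp add: CntP_def OpP_def)
  moreover have "Begin M X = Y \<or> prec M (Begin M X) Y"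
    using prec_Begin_if_not_prec[OF Y_action Y(2)] .
  ultimately show ?thesis
    using prec_trans by metis
qed

end

theorem lemma3p7:
  fixes M :: "'e sysexec" and X Y Z :: 'e
  assumes "system_execution M" and "A0 M" and "A1 M" and "A2 M"
    and "arrow M X Y" and "arrow M Y Z"
  shows "(isAdd M X \<longrightarrow> prec M X Z \<and> CntP M C1 Y \<and> RemP M C1 Z)
       \<and> (isRem M X \<longrightarrow> prec M X Z)
       \<and> (isCnt M X \<longrightarrow> prec M (Begin M X) (End M Z))"
proof -
  interpret lazy_set_execution M
    using assms(1-4) by unfold_locales
  show ?thesis
    using arrow_arrow_from_Add arrow_arrow_from_Rem arrow_arrow_from_Cnt assms(5,6) by blast
qed

end
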